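(* Let $w$ be a non-degenerate 3-web on an open subset of $\mathbb{R}^3$ formed by two foliations by surfaces and one foliation by curves. Then the rank of $w$ is at most $1$.
   Context: For a web $w$ formed by foliations $\mathcal{F}_1,\dots,\mathcal{F}_d$ (leaves may have different dimensions), an abelian relation is a $d$-tuple of 1-forms $(\sigma_1,\dots,\sigma_d)$ such that each $\sigma_i$ vanishes on the leaves of $\mathcal{F}_i$, each $\sigma_i$ is closed, and $\sigma_1+\dots+\sigma_d=0$; the rank of $w$ is the dimension of the real vector space of abelian relations. Non-degenerate means: the two surface foliations are transversal (their tangent planes are distinct at each point), and the tangent line of the curve foliation is, at each point, not contained in the tangent plane of either surface foliation. The statement is local. *)

theory Defs
  imports "HOL-Analysis.Analysis" "HOL-Library.Extended_Nat"
begin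

fun Ck_on :: "nat \<Rightarrow> 'a::real_normed_vector set \<Rightarrow> ('a \<Rightarrow> 'b::real_normed_vector) \<Rightarrow> bool" where
  "Ck_on 0 S f = continuous_on S f"
| "Ck_on (Suc k) S f =
     (f differentiable_on S \<and> (\<forall>v. Ck_on k S (\<lambda>p. frechet_derivative f (at p) v)))"

definition smooth_on :: "'a::real_normed_vector set \<Rightarrow> ('a \<Rightarrow> 'b::real_normed_vector) \<Rightarrow> bool" where
  "smooth_on S f \<longleftrightarrow> (\<forall>k. Ck_on k S f)"

text \<open>A foliation is represented by its tangent distribution T (T p = tangent space at p of
  the leaf through p), which locally is the kernel of the differential of a smooth submersion
  (the leaves being, locally, the level sets of that submersion).\<close>
definition surface_foliation :: "(real^3) set \<Rightarrow> (real^3 \<Rightarrow> (real^3) set) \<Rightarrow> bool" where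
  "surface_foliation U T \<longleftrightarrow>
     (\<forall>p\<in>U. \<exists>V (g :: real^3 \<Rightarrow> real). open V \<and> p \<in> V \<and> V \<subseteq> U \<and> smooth_on V g \<and>
        (\<forall>q\<in>V. surj (frechet_derivative g (at q)) \<and>
                T q = {v. frechet_derivative g (at q) v = 0}))"

definition curve_foliation :: "(real^3) set \<Rightarrow> (real^3 \<Rightarrow> (real^3) set) \<Rightarrow> bool" where
  "curve_foliation U T \<longleftrightarrow>
     (\<forall>p\<in>U. \<exists>V (g :: real^3 \<Rightarrow> real^2). open V \<and> p \<in> V \<and> V \<subseteq> U \<and> smooth_on V g \<and>
        (\<forall>q\<in>V. surj (frechet_derivative g (at q)) \<and>
                T q = {v. frechet_derivative g (at q) v = 0}))"

definition nondegenerate_web :: "(real^3) set \<Rightarrow> (real^3 \<Rightarrow> (real^3) set) \<Rightarrow>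
    (real^3 \<Rightarrow> (real^3) set) \<Rightarrow> (real^3 \<Rightarrow> (real^3) set) \<Rightarrow> bool" where
  "nondegenerate_web U T1 T2 T3 \<longleftrightarrow>
     (\<forall>p\<in>U. T1 p \<noteq> T2 p \<and> \<not> T3 p \<subseteq> T1 p \<and> \<not> T3 p \<subseteq> T2 p)"

text \<open>A 1-form on an open set of R^3 is represented by its coefficient vector field
  sigma = sigma_1 dx_1 + sigma_2 dx_2 + sigma_3 dx_3, acting on a tangent vector v at p
  as sigma p \<bullet> v. It is closed iff it is smooth and d sigma = 0, i.e. its Jacobian is symmetric.\<close>
type_synonym form1 = "real^3 \<Rightarrow> real^3"

definition closed_form :: "(real^3) set \<Rightarrow> form1 \<Rightarrow> bool" where
  "closed_form U \<sigma> \<longleftrightarrow> smooth_on U \<sigma> \<and>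
     (\<forall>p\<in>U. \<forall>u v. frechet_derivative \<sigma> (at p) u \<bullet> v = frechet_derivative \<sigma> (at p) v \<bullet> u)"

definition vanishes_on_leaves :: "(real^3) set \<Rightarrow> (real^3 \<Rightarrow> (real^3) set) \<Rightarrow> form1 \<Rightarrow> bool" where
  "vanishes_on_leaves U T \<sigma> \<longleftrightarrow> (\<forall>p\<in>U. \<forall>v\<in>T p. \<sigma> p \<bullet> v = 0)"

definition abelian_relation :: "(real^3) set \<Rightarrow> (real^3 \<Rightarrow> (real^3) set) \<Rightarrow>
    (real^3 \<Rightarrow> (real^3) set) \<Rightarrow> (real^3 \<Rightarrow> (real^3) set) \<Rightarrow> form1 \<times> form1 \<times> form1 \<Rightarrow> bool" where
  "abelian_relation U T1 T2 T3 R \<longleftrightarrow>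
     (case R of (\<sigma>1, \<sigma>2, \<sigma>3) \<Rightarrow>
        vanishes_on_leaves U T1 \<sigma>1 \<and> vanishes_on_leaves U T2 \<sigma>2 \<and> vanishes_on_leaves U T3 \<sigma>3 \<and>
        closed_form U \<sigma>1 \<and> closed_form U \<sigma>2 \<and> closed_form U \<sigma>3 \<and>
        (\<forall>p\<in>U. \<sigma>1 p + \<sigma>2 p + \<sigma>3 p = 0))"

definition independent_on :: "(real^3) set \<Rightarrow> nat \<Rightarrow> (nat \<Rightarrow> form1 \<times> form1 \<times> form1) \<Rightarrow> bool" where
  "independent_on U n R \<longleftrightarrow>
     (\<forall>c :: nat \<Rightarrow> real.
        (\<forall>p\<in>U. (\<Sum>k<n. c k *\<^sub>R fst (R k) p) = 0 \<and>
                (\<Sum>k<n. c k *\<^sub>R fst (snd (R k)) p) = 0 \<and>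
                (\<Sum>k<n. c k *\<^sub>R snd (snd (R k)) p) = 0)
        \<longrightarrow> (\<forall>k<n. c k = 0))"

text \<open>Rank: dimension (possibly infinite) of the real vector space of abelian relations,
  i.e. the supremum of the sizes of linearly independent finite families.\<close>
definition web_rank :: "(real^3) set \<Rightarrow> (real^3 \<Rightarrow> (real^3) set) \<Rightarrow>
    (real^3 \<Rightarrow> (real^3) set) \<Rightarrow> (real^3 \<Rightarrow> (real^3) set) \<Rightarrow> enat" where
  "web_rank U T1 T2 T3 =
     Sup {enat n | n. \<exists>R. (\<forall>k<n. abelian_relation U T1 T2 T3 (R k)) \<and> independent_on U n R}"

end

theory Submission
  imports Defs
begin

text \<open>Locally the leaves of the surface foliation \<open>F\<^sub>i\<close> are the level sets of a submersion
  \<open>g\<^sub>i\<close>, and a 1-form vanishing on them is \<open>\<sigma>\<^sub>i = a\<^sub>i dg\<^sub>i\<close>. Closedness of \<open>\<sigma>\<^sub>i\<close> means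
  \<open>da\<^sub>i \<and> dg\<^sub>i = 0\<close> (wedge product), so \<open>a\<^sub>i\<close> is constant along the leaves of \<open>F\<^sub>i\<close>.
  Pointwise, if \<open>\<sigma>\<^sub>1(p) = 0\<close> then \<open>\<sigma>\<^sub>2(p) = -\<sigma>\<^sub>3(p)\<close> vanishes on \<open>T\<^sub>2(p)\<close> and on
  the line \<open>T\<^sub>3(p)\<close>, which is not contained in \<open>T\<^sub>2(p)\<close>, hence \<open>\<sigma>\<^sub>2(p) = 0\<close>, and
  symmetrically. In a chart with coordinates \<open>(g\<^sub>1, g\<^sub>2, *)\<close> a zero of \<open>\<sigma>\<^sub>1\<close> therefore spreads along the leaf of \<open>F\<^sub>1\<close>, turns into a zero of
  \<open>\<sigma>\<^sub>2\<close>, and spreads along the leaves of \<open>F\<^sub>2\<close>, filling a neighbourhood; by connectedness an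
  abelian relation vanishing at one point vanishes everywhere. As \<open>\<sigma>\<^sub>1(p\<^sub>0)\<close> is confined to the
  line orthogonal to \<open>T\<^sub>1(p\<^sub>0)\<close>, some nontrivial combination of any two relations vanishes at
  \<open>p\<^sub>0\<close>, hence identically.\<close>

lemma smooth_on_Ck_on: "smooth_on S f \<Longrightarrow> Ck_on k S f"
  unfolding smooth_on_def by blast

lemma smooth_on_continuous_on: "smooth_on S f \<Longrightarrow> continuous_on S f"
  using smooth_on_Ck_on[of S f 0] by simp

lemma smooth_on_frechet_derivative:
  "smooth_on S f \<Longrightarrow> smooth_on S (\<lambda>p. frechet_derivative f (at p) v)"
  unfolding smooth_on_def by (metis Ck_on.simps(2))

lemma Ck_on_subset: "Ck_on k V f \<Longrightarrow> W \<subseteq> V \<Longrightarrow> Ck_on k W f"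
  by (induction k arbitrary: f) (auto intro: continuous_on_subset differentiable_on_subset)

lemma smooth_on_subset: "smooth_on V f \<Longrightarrow> W \<subseteq> V \<Longrightarrow> smooth_on W f"
  unfolding smooth_on_def using Ck_on_subset by blast

lemma smooth_on_has_derivative:
  assumes "open S" "smooth_on S f" "x \<in> S"
  shows "(f has_derivative frechet_derivative f (at x)) (at x)"
proof -
  have "f differentiable_on S"
    using smooth_on_Ck_on[OF assms(2), of 1] by simp
  then show ?thesis
    using assms(1,3) by (simp add: differentiable_on_eq_differentiable_at frechet_derivative_works)
qed

section \<open>Mean values and symmetry of second derivatives\<close>

lemma has_real_derivative_along_line:
  fixes f :: "'a::real_normed_vector \<Rightarrow> real"
  assumes "(f has_derivative f') (at (a + t *\<^sub>R v))"
  shows "((\<lambda>t. f (a + t *\<^sub>R v)) has_real_derivative f' v) (at t)"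
proof -
  have line: "((\<lambda>t. a + t *\<^sub>R v) has_derivative (\<lambda>h. h *\<^sub>R v)) (at t)"
    by (auto intro!: derivative_eq_intros)
  have "(\<lambda>h. f' (h *\<^sub>R v)) = (*) (f' v)"
    using linear_scale[OF has_derivative_linear[OF assms]] by (auto simp: mult.commute)
  then show ?thesis
    using has_derivative_compose[OF line assms] by (simp add: has_field_derivative_def o_def)
qed

lemma mean_value_along_segment:
  fixes f :: "'a::real_normed_vector \<Rightarrow> real"
  assumes "0 < s"
    and "\<And>r. 0 \<le> r \<Longrightarrow> r \<le> s \<Longrightarrow> (f has_derivative D (x + r *\<^sub>R u)) (at (x + r *\<^sub>R u))"
  obtains r where "0 < r" "r < s" "f (x + s *\<^sub>R u) - f x = s * D (x + r *\<^sub>R u) u"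
proof -
  have "((\<lambda>r. f (x + r *\<^sub>R u)) has_real_derivative D (x + r *\<^sub>R u) u) (at r)"
    if "0 \<le> r" "r \<le> s" for r
    using assms(2)[OF that] by (rule has_real_derivative_along_line)
  from MVT2[OF assms(1) this] show ?thesis
    using that by auto
qed

lemma dist_add_scaled_le:
  fixes u w :: "'a::real_normed_vector"
  assumes "0 \<le> a" "a \<le> s" "0 \<le> b" "b \<le> s"
  shows "dist x (x + a *\<^sub>R w + b *\<^sub>R u) \<le> s * (norm u + norm w)"
proof -
  have "dist x (x + a *\<^sub>R w + b *\<^sub>R u) = norm (a *\<^sub>R w + b *\<^sub>R u)"
    by (metis add.assoc add_diff_cancel_left' dist_commute dist_norm)
  also have "\<dots> \<le> a * norm w + b * norm u"
    using norm_triangle_ineq[of "a *\<^sub>R w" "b *\<^sub>R u"] assms by simp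
  also have "\<dots> \<le> s * norm w + s * norm u"
    using assms by (intro add_mono mult_right_mono) auto
  finally show ?thesis
    by (simp add: algebra_simps)
qed

lemma second_difference_mean_value:
  fixes g :: "'a::real_normed_vector \<Rightarrow> real"
  assumes S: "open S" "smooth_on S g" and B: "ball x \<delta> \<subseteq> S" and s: "0 < s"
    and small: "s * (norm u + norm w) < \<delta>"
  obtains \<xi> where "dist x \<xi> < \<delta>"
    "g (x + s *\<^sub>R w + s *\<^sub>R u) - g (x + s *\<^sub>R w) - g (x + s *\<^sub>R u) + g x
       = s\<^sup>2 * frechet_derivative (\<lambda>p. frechet_derivative g (at p) w) (at \<xi>) u"
proof -
  let ?Dg = "\<lambda>z. frechet_derivative g (at z)" and ?G = "\<lambda>p. frechet_derivative g (at p) w"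
  have close: "dist x (x + a *\<^sub>R w + b *\<^sub>R u) < \<delta>"
    if "0 \<le> a" "a \<le> s" "0 \<le> b" "b \<le> s" for a b
    using dist_add_scaled_le[OF that, of x w u] small by linarith
  have inS: "x + a *\<^sub>R w + b *\<^sub>R u \<in> S" if "0 \<le> a" "a \<le> s" "0 \<le> b" "b \<le> s" for a b
    using close[OF that] B by auto
  have dg: "(g has_derivative ?Dg z) (at z)" if "z \<in> S" for z
    using smooth_on_has_derivative[OF S that] .
  have dG: "(?G has_derivative frechet_derivative ?G (at z)) (at z)" if "z \<in> S" for z
    using smooth_on_has_derivative[OF S(1) smooth_on_frechet_derivative[OF S(2)] that] .
  have d1: "((\<lambda>z. g (z + s *\<^sub>R u) - g z) has_derivative
      (\<lambda>v. ?Dg (x + r *\<^sub>R w + s *\<^sub>R u) v - ?Dg (x + r *\<^sub>R w) v)) (at (x + r *\<^sub>R w))"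
    if r: "0 \<le> r" "r \<le> s" for r
  proof -
    have shift: "((\<lambda>z. z + s *\<^sub>R u) has_derivative (\<lambda>h. h)) (at (x + r *\<^sub>R w))"
      by (intro derivative_eq_intros) auto
    have "((\<lambda>z. g (z + s *\<^sub>R u)) has_derivative ?Dg (x + r *\<^sub>R w + s *\<^sub>R u)) (at (x + r *\<^sub>R w))"
      using has_derivative_compose[OF shift dg[OF inS[OF r]]] s by simp
    then show ?thesis
      using inS[of r 0] r s by (auto intro!: has_derivative_diff dg)
  qed
  obtain t where t: "0 < t" "t < s" and mv1:
    "g (x + s *\<^sub>R w + s *\<^sub>R u) - g (x + s *\<^sub>R w) - (g (x + s *\<^sub>R u) - g x)
       = s * (?G (x + t *\<^sub>R w + s *\<^sub>R u) - ?G (x + t *\<^sub>R w))"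
    by (rule mean_value_along_segment[OF s d1]) (assumption | rule that)+
  have d2: "(?G has_derivative frechet_derivative ?G (at (x + t *\<^sub>R w + r *\<^sub>R u))) (at (x + t *\<^sub>R w + r *\<^sub>R u))"
    if "0 \<le> r" "r \<le> s" for r
    using dG[OF inS[of t r]] t that by simp
  obtain r where r: "0 < r" "r < s" and mv2:
    "?G (x + t *\<^sub>R w + s *\<^sub>R u) - ?G (x + t *\<^sub>R w)
       = s * frechet_derivative ?G (at (x + t *\<^sub>R w + r *\<^sub>R u)) u"
    by (rule mean_value_along_segment[OF s d2]) (assumption | rule that)+
  show ?thesis
  proof (rule that)
    show "dist x (x + t *\<^sub>R w + r *\<^sub>R u) < \<delta>"
      using close t r by simp
    show "g (x + s *\<^sub>R w + s *\<^sub>R u) - g (x + s *\<^sub>R w) - g (x + s *\<^sub>R u) + g x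
        = s\<^sup>2 * frechet_derivative ?G (at (x + t *\<^sub>R w + r *\<^sub>R u)) u"
      using mv1 mv2 by (simp add: power2_eq_square algebra_simps)
  qed
qed

lemma second_frechet_derivative_symmetric:
  fixes g :: "'a::real_normed_vector \<Rightarrow> real"
  assumes S: "open S" "smooth_on S g" and x: "x \<in> S"
  shows "frechet_derivative (\<lambda>p. frechet_derivative g (at p) w) (at x) u
       = frechet_derivative (\<lambda>p. frechet_derivative g (at p) u) (at x) w"
proof -
  define H1 where "H1 z = frechet_derivative (\<lambda>p. frechet_derivative g (at p) w) (at z) u" for z
  define H2 where "H2 z = frechet_derivative (\<lambda>p. frechet_derivative g (at p) u) (at z) w" for z
  have cont: "continuous_on S H1" "continuous_on S H2"
    unfolding H1_def H2_def by (intro smooth_on_continuous_on smooth_on_frechet_derivative S(2))+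
  have near: "\<bar>H1 x - H2 x\<bar> < 2 * e" if e: "0 < e" for e
  proof -
    obtain d1 where d1: "0 < d1" "\<And>\<xi>. \<xi> \<in> S \<Longrightarrow> dist \<xi> x < d1 \<Longrightarrow> dist (H1 \<xi>) (H1 x) < e"
      using cont(1) x e unfolding continuous_on_iff by metis
    obtain d2 where d2: "0 < d2" "\<And>\<xi>. \<xi> \<in> S \<Longrightarrow> dist \<xi> x < d2 \<Longrightarrow> dist (H2 \<xi>) (H2 x) < e"
      using cont(2) x e unfolding continuous_on_iff by metis
    obtain d0 where d0: "0 < d0" "ball x d0 \<subseteq> S"
      using S(1) x openE by blast
    define \<delta> where "\<delta> = min d0 (min d1 d2)"
    define s where "s = \<delta> / (norm u + norm w + 1)"
    have \<delta>: "0 < \<delta>" "ball x \<delta> \<subseteq> S"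
      using d0 d1 d2 by (auto simp: \<delta>_def)
    have P: "0 < norm u + norm w + 1"
      using norm_ge_zero[of u] norm_ge_zero[of w] by linarith
    have s: "0 < s"
      using \<delta> P by (simp add: s_def)
    have "s * (norm u + norm w) < s * (norm u + norm w + 1)"
      using s by simp
    also have "\<dots> = \<delta>"
      using P by (simp add: s_def)
    finally have small: "s * (norm u + norm w) < \<delta>" "s * (norm w + norm u) < \<delta>"
      by (simp_all add: add.commute)
    obtain \<xi>1 where \<xi>1: "dist x \<xi>1 < \<delta>"
      "g (x + s *\<^sub>R w + s *\<^sub>R u) - g (x + s *\<^sub>R w) - g (x + s *\<^sub>R u) + g x
        = s\<^sup>2 * frechet_derivative (\<lambda>p. frechet_derivative g (at p) w) (at \<xi>1) u"
      by (rule second_difference_mean_value[OF S \<delta>(2) s small(1)]) (assumption | rule that)+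
    obtain \<xi>2 where \<xi>2: "dist x \<xi>2 < \<delta>"
      "g (x + s *\<^sub>R u + s *\<^sub>R w) - g (x + s *\<^sub>R u) - g (x + s *\<^sub>R w) + g x
        = s\<^sup>2 * frechet_derivative (\<lambda>p. frechet_derivative g (at p) u) (at \<xi>2) w"
      by (rule second_difference_mean_value[OF S \<delta>(2) s small(2)]) (assumption | rule that)+
    have "H1 \<xi>1 = H2 \<xi>2"
      using \<xi>1(2) \<xi>2(2) s by (simp add: H1_def H2_def algebra_simps)
    moreover have "\<xi>1 \<in> S" "\<xi>2 \<in> S" "dist \<xi>1 x < min d1 d2" "dist \<xi>2 x < min d1 d2"
      using \<xi>1(1) \<xi>2(1) \<delta>(2) by (auto simp: \<delta>_def dist_commute)
    then have "dist (H1 \<xi>1) (H1 x) < e" "dist (H2 \<xi>2) (H2 x) < e"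
      using d1(2) d2(2) by auto
    ultimately show ?thesis
      by (simp add: dist_real_def)
  qed
  have "H1 x = H2 x"
  proof (rule ccontr)
    assume "H1 x \<noteq> H2 x"
    then show False
      using near[of "\<bar>H1 x - H2 x\<bar> / 2"] by simp
  qed
  then show ?thesis
    by (simp add: H1_def H2_def)
qed

section \<open>Covectors vanishing on hyperplanes\<close>

lemma inner_factors_through_functional:
  fixes \<sigma> :: "'a::real_inner"
  assumes L: "linear L" and v0: "L v0 \<noteq> (0::real)" and ker: "\<And>v. L v = 0 \<Longrightarrow> \<sigma> \<bullet> v = 0"
  shows "\<sigma> \<bullet> v = (\<sigma> \<bullet> v0 / L v0) * L v"
proof -
  define c where "c = L v / L v0"
  have "L (v - c *\<^sub>R v0) = 0"
    using L v0 by (simp add: linear_diff linear_scale c_def)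
  then have "\<sigma> \<bullet> (v - c *\<^sub>R v0) = 0"
    by (rule ker)
  then show ?thesis
    by (simp add: inner_diff_right c_def)
qed

lemma vanishes_on_kernel_and_transversal_imp_zero:
  fixes \<sigma> :: "'a::real_inner"
  assumes L: "linear L" and v0: "L v0 \<noteq> (0::real)" and ker: "\<And>v. L v = 0 \<Longrightarrow> \<sigma> \<bullet> v = 0"
    and "\<sigma> \<bullet> v0 = 0"
  shows "\<sigma> = 0"
  using inner_factors_through_functional[OF L v0 ker, of \<sigma>] assms(4) by simp

lemma surface_foliation_chart:
  assumes "surface_foliation U T" "p \<in> U"
  obtains V and g :: "real^3 \<Rightarrow> real" where "open V" "p \<in> V" "V \<subseteq> U" "smooth_on V g"
    "\<And>q. q \<in> V \<Longrightarrow> surj (frechet_derivative g (at q))"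
    "\<And>q. q \<in> V \<Longrightarrow> T q = {v. frechet_derivative g (at q) v = 0}"
proof -
  have "\<exists>V (g :: real^3 \<Rightarrow> real). open V \<and> p \<in> V \<and> V \<subseteq> U \<and> smooth_on V g \<and>
      (\<forall>q\<in>V. surj (frechet_derivative g (at q)) \<and> T q = {v. frechet_derivative g (at q) v = 0})"
    using assms unfolding surface_foliation_def by (rule bspec)
  then show ?thesis
    using that by blast
qed

lemma surface_foliation_tangent_kernel:
  assumes "surface_foliation U T" "q \<in> U"
  obtains L :: "real^3 \<Rightarrow> real" and v0 where "linear L" "L v0 \<noteq> 0" "T q = {v. L v = 0}"
proof -
  obtain V and g :: "real^3 \<Rightarrow> real" where V: "open V" "q \<in> V" "smooth_on V g"
    and surj: "surj (frechet_derivative g (at q))"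
    and T: "T q = {v. frechet_derivative g (at q) v = 0}"
    using surface_foliation_chart[OF assms] by metis
  obtain v0 where "frechet_derivative g (at q) v0 = 1"
    using surj by (metis surjD)
  moreover have "linear (frechet_derivative g (at q))"
    using smooth_on_has_derivative[OF V(1,3,2)] has_derivative_linear by blast
  ultimately show ?thesis
    using that[of "frechet_derivative g (at q)" v0] T by simp
qed

lemma vanishes_on_transversal_leaves_imp_zero:
  assumes "surface_foliation U T" "q \<in> U" "\<not> T' q \<subseteq> T q"
    and "\<forall>v\<in>T q. \<sigma> \<bullet> v = 0" "\<forall>v\<in>T' q. \<sigma> \<bullet> v = 0"
  shows "\<sigma> = 0"
proof -
  obtain L :: "real^3 \<Rightarrow> real" and v0 where L: "linear L" "L v0 \<noteq> 0" "T q = {v. L v = 0}"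
    by (rule surface_foliation_tangent_kernel[OF assms(1,2)]) (assumption | rule that)+
  obtain l where "l \<in> T' q" "l \<notin> T q"
    using assms(3) by blast
  then show ?thesis
    using vanishes_on_kernel_and_transversal_imp_zero[OF L(1), of l \<sigma>] assms(4,5) L(3) by auto
qed

lemma vanishes_on_leaf_imp_parallel:
  assumes "surface_foliation U T" "q \<in> U"
    and \<sigma>: "\<forall>v\<in>T q. \<sigma> \<bullet> v = 0" and \<tau>: "\<forall>v\<in>T q. \<tau> \<bullet> v = 0" "\<tau> \<noteq> 0"
  obtains c where "\<sigma> = c *\<^sub>R \<tau>"
proof -
  obtain L :: "real^3 \<Rightarrow> real" and v0 where L: "linear L" "L v0 \<noteq> 0" and T: "T q = {v. L v = 0}"
    by (rule surface_foliation_tangent_kernel[OF assms(1,2)]) (assumption | rule that)+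
  have "\<tau> \<bullet> v0 \<noteq> 0"
    using vanishes_on_kernel_and_transversal_imp_zero[OF L] \<tau> T by auto
  then have "(\<sigma> - (\<sigma> \<bullet> v0 / (\<tau> \<bullet> v0)) *\<^sub>R \<tau>) \<bullet> v0 = 0"
    by (simp add: inner_diff_left)
  moreover have "(\<sigma> - (\<sigma> \<bullet> v0 / (\<tau> \<bullet> v0)) *\<^sub>R \<tau>) \<bullet> v = 0" if "L v = 0" for v
    using \<sigma> \<tau> T that by (simp add: inner_diff_left)
  ultimately have "\<sigma> - (\<sigma> \<bullet> v0 / (\<tau> \<bullet> v0)) *\<^sub>R \<tau> = 0"
    using vanishes_on_kernel_and_transversal_imp_zero[OF L] by blast
  then show ?thesis
    using that by simp
qed

lemma cross3_nonzero_if_kernels_differ: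
  fixes N1 N2 :: "real^3"
  assumes "N1 \<noteq> 0" "N2 \<noteq> 0" "{v. N1 \<bullet> v = 0} \<noteq> {v. N2 \<bullet> v = 0}"
  shows "cross3 N1 N2 \<noteq> 0"
proof
  assume "cross3 N1 N2 = 0"
  then have "collinear {0, N1, N2}"
    by (simp add: cross_eq_0)
  then obtain c where "N2 = c *\<^sub>R N1"
    using assms(1,2) by (auto simp: collinear_lemma)
  moreover have "c \<noteq> 0"
    using assms(2) calculation by auto
  ultimately show False
    using assms(3) by simp
qed

lemma orthogonal_to_cross3_frame_imp_zero:
  fixes a b v :: "real^3"
  assumes "a \<bullet> v = 0" "b \<bullet> v = 0" "cross3 a b \<bullet> v = 0" "cross3 a b \<noteq> 0"
  shows "v = 0"
proof -
  have "(cross3 a b \<bullet> cross3 a b) *\<^sub>R v = (v \<bullet> a) *\<^sub>R cross3 b (cross3 a b)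
      + (v \<bullet> b) *\<^sub>R cross3 (cross3 a b) a + (v \<bullet> cross3 a b) *\<^sub>R cross3 a b"
    unfolding cross3_def inner_vec_def sum_3 vec_eq_iff vector_def
    by (simp add: forall_3 vector_3 algebra_simps)
  then have "(cross3 a b \<bullet> cross3 a b) *\<^sub>R v = 0"
    using assms by (simp add: inner_commute)
  then show ?thesis
    using assms(4) by simp
qed

lemma independent_functionals_cross3:
  fixes L1 L2 :: "real^3 \<Rightarrow> real"
  assumes "linear L1" "linear L2" "{v. L1 v = 0} \<noteq> {v. L2 v = 0}"
    and "{v. L1 v = 0} \<noteq> UNIV" "{v. L2 v = 0} \<noteq> UNIV"
  obtains N1 N2 where "\<And>v. L1 v = N1 \<bullet> v" "\<And>v. L2 v = N2 \<bullet> v" "cross3 N1 N2 \<noteq> 0"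
proof -
  have L1: "L1 v = adjoint L1 1 \<bullet> v" and L2: "L2 v = adjoint L2 1 \<bullet> v" for v
    using adjoint_works[OF assms(1), of v 1] adjoint_works[OF assms(2), of v 1] by (simp_all add: inner_commute)
  have "cross3 (adjoint L1 1) (adjoint L2 1) \<noteq> 0"
    using assms(3-5) by (intro cross3_nonzero_if_kernels_differ) (auto simp: L1 L2)
  then show ?thesis
    using that L1 L2 by blast
qed

section \<open>Coefficients of closed forms along a surface foliation\<close>

lemma has_derivative_of_inner_factorization:
  fixes \<sigma> :: "'a::real_inner \<Rightarrow> 'a"
  assumes "open W" "q \<in> W" "(\<sigma> has_derivative D\<sigma>) (at q)"
    and "(a has_derivative Da) (at q)" "(G has_derivative DG) (at q)"
    and "\<And>x. x \<in> W \<Longrightarrow> \<sigma> x \<bullet> v = a x * G x"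
  shows "D\<sigma> h \<bullet> v = a q * DG h + Da h * G q"
proof -
  have "((\<lambda>x. \<sigma> x \<bullet> v) has_derivative (\<lambda>h. a q * DG h + Da h * G q)) (at q)"
    by (rule has_derivative_transform_within_open[OF has_derivative_mult[OF assms(4,5)] assms(1,2)])
      (simp add: assms(6))
  moreover have "((\<lambda>x. \<sigma> x \<bullet> v) has_derivative (\<lambda>h. D\<sigma> h \<bullet> v)) (at q)"
    by (rule has_derivative_inner_left[OF assms(3)])
  ultimately show ?thesis
    by (metis has_derivative_unique)
qed

lemma coefficient_derivative_vanishes_on_kernel:
  fixes g :: "'a::real_inner \<Rightarrow> real" and \<sigma> :: "'a \<Rightarrow> 'a"
  assumes W: "open W" "smooth_on W g" and q: "q \<in> W"
    and nz: "\<And>x. x \<in> W \<Longrightarrow> frechet_derivative g (at x) v0 \<noteq> 0"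
    and ker: "\<And>x v. x \<in> W \<Longrightarrow> frechet_derivative g (at x) v = 0 \<Longrightarrow> \<sigma> x \<bullet> v = 0"
    and d\<sigma>: "(\<sigma> has_derivative D\<sigma>) (at q)" and sym: "\<And>u v. D\<sigma> u \<bullet> v = D\<sigma> v \<bullet> u"
  obtains Da where "((\<lambda>x. \<sigma> x \<bullet> v0 / frechet_derivative g (at x) v0) has_derivative Da) (at q)"
    "\<And>w. frechet_derivative g (at q) w = 0 \<Longrightarrow> Da w = 0"
proof -
  define G where "G v x = frechet_derivative g (at x) v" for v x
  define DG where "DG v = frechet_derivative (G v) (at q)" for v
  define a where "a x = \<sigma> x \<bullet> v0 / G v0 x" for x
  have dG: "(G v has_derivative DG v) (at q)" for v
    unfolding DG_def G_def by (rule smooth_on_has_derivative[OF W(1) smooth_on_frechet_derivative[OF W(2)] q])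
  have "G v0 q \<noteq> 0"
    using nz[OF q] by (simp add: G_def)
  then have "a differentiable at q"
    unfolding a_def by (rule differentiableI[OF has_derivative_divide'[OF has_derivative_inner_left[OF d\<sigma>] dG]])
  then obtain Da where da: "(a has_derivative Da) (at q)"
    unfolding differentiable_def by blast
  have lin: "linear (frechet_derivative g (at x))" if "x \<in> W" for x
    by (rule has_derivative_linear[OF smooth_on_has_derivative[OF W that]])
  have factor: "\<sigma> x \<bullet> v = a x * G v x" if "x \<in> W" for x v
    using inner_factors_through_functional[OF lin[OF that] nz[OF that] ker[OF that], where v=v]
    by (simp add: a_def G_def)
  have product_rule: "D\<sigma> h \<bullet> v = a q * DG v h + Da h * G v q" for h v
    by (rule has_derivative_of_inner_factorization[OF W(1) q d\<sigma> da dG[of v]]) (rule factor)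
  \<comment> \<open>differentiate \<open>\<sigma> \<bullet> v = a * dg v\<close> in the directions \<open>w\<close> and \<open>v\<^sub>0\<close>; the symmetry of
    \<open>D\<sigma>\<close> and of the Hessian of \<open>g\<close> leaves only \<open>Da w * dg v\<^sub>0\<close>\<close>
  have kill: "Da w = 0" if w: "frechet_derivative g (at q) w = 0" for w
  proof -
    have "DG v0 w = DG w v0"
      unfolding DG_def G_def by (rule second_frechet_derivative_symmetric[OF W q])
    have "G w q = 0"
      using w by (simp add: G_def)
    then have "D\<sigma> v0 \<bullet> w = a q * DG w v0"
      using product_rule[of v0 w] by simp
    moreover have "D\<sigma> w \<bullet> v0 = a q * DG v0 w + Da w * G v0 q"
      by (rule product_rule)
    ultimately have "Da w * G v0 q = 0"
      using sym[of w v0] \<open>DG v0 w = DG w v0\<close> by simp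
    then show ?thesis
      using nz[OF q] by (simp add: G_def)
  qed
  show ?thesis
    by (rule that[OF da[unfolded a_def G_def] kill])
qed

definition symmetric_derivative_on :: "'a::real_inner set \<Rightarrow> ('a \<Rightarrow> 'a) \<Rightarrow> bool" where
  "symmetric_derivative_on U \<sigma> \<longleftrightarrow>
     (\<forall>q\<in>U. \<sigma> differentiable (at q) \<and>
        (\<forall>u v. frechet_derivative \<sigma> (at q) u \<bullet> v = frechet_derivative \<sigma> (at q) v \<bullet> u))"

lemma surface_foliation_chart_transversal:
  assumes "surface_foliation U T" "p \<in> U"
  obtains W and g :: "real^3 \<Rightarrow> real" and v0 where "open W" "p \<in> W" "W \<subseteq> U" "smooth_on W g"
    "\<And>q. q \<in> W \<Longrightarrow> T q = {v. frechet_derivative g (at q) v = 0}"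
    "\<And>q. q \<in> W \<Longrightarrow> frechet_derivative g (at q) v0 \<noteq> 0"
proof -
  obtain V and g :: "real^3 \<Rightarrow> real" where V: "open V" "p \<in> V" "V \<subseteq> U" "smooth_on V g"
    and surj: "\<And>q. q \<in> V \<Longrightarrow> surj (frechet_derivative g (at q))"
    and T: "\<And>q. q \<in> V \<Longrightarrow> T q = {v. frechet_derivative g (at q) v = 0}"
    by (rule surface_foliation_chart[OF assms]) (assumption | rule that)+
  obtain v0 where v0: "frechet_derivative g (at p) v0 = 1"
    using surj[OF V(2)] by (metis surjD)
  have "continuous_on V (\<lambda>x. frechet_derivative g (at x) v0)"
    by (intro smooth_on_continuous_on smooth_on_frechet_derivative V(4))
  then have "open (V \<inter> (\<lambda>x. frechet_derivative g (at x) v0) -` (- {0}))"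
    using V(1) by (intro continuous_open_preimage) auto
  then show ?thesis
    using V v0 T smooth_on_subset[OF V(4)]
    by (intro that[of "V \<inter> (\<lambda>x. frechet_derivative g (at x) v0) -` (- {0})" g v0]) auto
qed

lemma surface_foliation_leaf_coefficient:
  fixes \<sigma> :: "real^3 \<Rightarrow> real^3"
  assumes F: "surface_foliation U T" and p: "p \<in> U"
    and van: "vanishes_on_leaves U T \<sigma>" and sym: "symmetric_derivative_on U \<sigma>"
  obtains W and g a :: "real^3 \<Rightarrow> real" where "open W" "p \<in> W" "W \<subseteq> U" "smooth_on W g"
    "\<And>q. q \<in> W \<Longrightarrow> T q = {v. frechet_derivative g (at q) v = 0}"
    "\<And>q. q \<in> W \<Longrightarrow>
       \<exists>Da. (a has_derivative Da) (at q) \<and> (\<forall>w. frechet_derivative g (at q) w = 0 \<longrightarrow> Da w = 0)"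
    "\<And>q. q \<in> W \<Longrightarrow> a q = 0 \<longleftrightarrow> \<sigma> q = 0"
proof -
  obtain W and g :: "real^3 \<Rightarrow> real" and v0 where W: "open W" "p \<in> W" "W \<subseteq> U" "smooth_on W g"
    and T: "\<And>q. q \<in> W \<Longrightarrow> T q = {v. frechet_derivative g (at q) v = 0}"
    and nz: "\<And>q. q \<in> W \<Longrightarrow> frechet_derivative g (at q) v0 \<noteq> 0"
    by (rule surface_foliation_chart_transversal[OF F p]) (assumption | rule that)+
  have ker: "\<sigma> x \<bullet> v = 0" if "x \<in> W" "frechet_derivative g (at x) v = 0" for x v
    using van T[of x] that W(3) unfolding vanishes_on_leaves_def by blast
  define a where "a x = \<sigma> x \<bullet> v0 / frechet_derivative g (at x) v0" for x
  show ?thesis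
  proof (rule that[of W g a, OF W T])
    show "\<exists>Da. (a has_derivative Da) (at q) \<and> (\<forall>w. frechet_derivative g (at q) w = 0 \<longrightarrow> Da w = 0)"
      if q: "q \<in> W" for q
    proof -
      have d\<sigma>: "(\<sigma> has_derivative frechet_derivative \<sigma> (at q)) (at q)"
        and sym\<sigma>: "\<And>u v. frechet_derivative \<sigma> (at q) u \<bullet> v = frechet_derivative \<sigma> (at q) v \<bullet> u"
        using sym q W(3) unfolding symmetric_derivative_on_def frechet_derivative_works by auto
      obtain Da where "((\<lambda>x. \<sigma> x \<bullet> v0 / frechet_derivative g (at x) v0) has_derivative Da) (at q)"
        "\<And>w. frechet_derivative g (at q) w = 0 \<Longrightarrow> Da w = 0"
        by (rule coefficient_derivative_vanishes_on_kernel[OF W(1,4) q nz ker d\<sigma> sym\<sigma>])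
          (assumption | rule that)+
      then show ?thesis
        unfolding a_def by blast
    qed
    show "a q = 0 \<longleftrightarrow> \<sigma> q = 0" if q: "q \<in> W" for q
      using vanishes_on_kernel_and_transversal_imp_zero[OF
          has_derivative_linear[OF smooth_on_has_derivative[OF W(1,4) q]] nz[OF q] ker[OF q]] nz[OF q]
      by (auto simp: a_def)
  qed
qed

section \<open>Rectifying charts\<close>

lemma inverse_function_chart:
  fixes f :: "'a::euclidean_space \<Rightarrow> 'a"
  assumes W: "open W" "p \<in> W"
    and df: "\<And>x. x \<in> W \<Longrightarrow> (f has_derivative Df x) (at x)"
    and cont: "\<And>v. continuous_on W (\<lambda>x. Df x v)"
    and inj: "inj (Df p)"
  obtains \<Psi> \<Psi>' Nb \<epsilon> where "open Nb" "p \<in> Nb" "0 < \<epsilon>"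
    "\<And>x. x \<in> Nb \<Longrightarrow> f x \<in> ball (f p) \<epsilon> \<and> \<Psi> (f x) = x"
    "\<And>y. y \<in> ball (f p) \<epsilon> \<Longrightarrow>
       \<Psi> y \<in> W \<and> (\<Psi> has_derivative \<Psi>' y) (at y) \<and> (\<forall>d. Df (\<Psi> y) (\<Psi>' y d) = d)"
proof -
  have bl: "bounded_linear (Df x)" if "x \<in> W" for x
    using df[OF that] has_derivative_bounded_linear by blast
  define fb where "fb x = Blinfun (Df x)" for x
  have fb: "blinfun_apply (fb x) = Df x" if "x \<in> W" for x
    unfolding fb_def by (rule bounded_linear_Blinfun_apply[OF bl[OF that]])
  have derf: "(f has_derivative blinfun_apply (fb x)) (at x)" if "x \<in> W" for x
    using df[OF that] fb[OF that] by simp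
  have contf: "continuous_on W fb"
    by (rule continuous_on_blinfun_componentwise, rule continuous_on_eq[OF cont]) (simp add: fb)
  obtain gi where gi: "linear gi" "gi \<circ> Df p = id"
    using linear_injective_left_inverse[OF bounded_linear.linear[OF bl[OF W(2)]] inj] by blast
  have invf: "Blinfun gi o\<^sub>L fb p = id_blinfun"
    using gi fb[OF W(2)] linear_conv_bounded_linear[of gi]
    by (intro blinfun_eqI) (simp add: bounded_linear_Blinfun_apply pointfree_idE)
  obtain U' V \<Psi> \<Psi>' where U': "open U'" "U' \<subseteq> W" "p \<in> U'" and V: "open V" "f p \<in> V"
    and hom: "homeomorphism U' V f \<Psi>"
    and d\<Psi>: "\<And>y. y \<in> V \<Longrightarrow> (\<Psi> has_derivative \<Psi>' y) (at y)"
    and inv: "\<And>y. y \<in> V \<Longrightarrow> \<Psi>' y = inv (blinfun_apply (fb (\<Psi> y)))"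
    and bij: "\<And>y. y \<in> V \<Longrightarrow> bij (blinfun_apply (fb (\<Psi> y)))"
    by (rule inverse_function_theorem[OF W(1) derf contf W(2) invf]) (assumption | rule that)+
  obtain \<epsilon> where \<epsilon>: "0 < \<epsilon>" "ball (f p) \<epsilon> \<subseteq> V"
    using V openE by blast
  have \<Psi>W: "\<Psi> y \<in> W" if "y \<in> V" for y
    using homeomorphism_image2[OF hom] U'(2) that by blast
  show ?thesis
  proof (rule that[of "U' \<inter> f -` ball (f p) \<epsilon>" \<epsilon> \<Psi> \<Psi>'])
    show "open (U' \<inter> f -` ball (f p) \<epsilon>)"
      by (rule continuous_open_preimage[OF homeomorphism_cont1[OF hom] U'(1) open_ball])
    show "p \<in> U' \<inter> f -` ball (f p) \<epsilon>" "0 < \<epsilon>"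
      using U'(3) \<epsilon>(1) by auto
    show "f x \<in> ball (f p) \<epsilon> \<and> \<Psi> (f x) = x" if "x \<in> U' \<inter> f -` ball (f p) \<epsilon>" for x
      using homeomorphism_apply1[OF hom] that by auto
    show "\<Psi> y \<in> W \<and> (\<Psi> has_derivative \<Psi>' y) (at y) \<and> (\<forall>d. Df (\<Psi> y) (\<Psi>' y d) = d)"
      if "y \<in> ball (f p) \<epsilon>" for y
      using that \<epsilon>(2) \<Psi>W d\<Psi> inv bij fb[OF \<Psi>W] by (auto simp: bij_is_surj surj_f_inv_f)
  qed
qed

lemma rectifying_chart:
  fixes g1 g2 :: "real^3 \<Rightarrow> real"
  assumes W: "open W" "p \<in> W"
    and dg1: "\<And>x. x \<in> W \<Longrightarrow> (g1 has_derivative D1 x) (at x)"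
    and dg2: "\<And>x. x \<in> W \<Longrightarrow> (g2 has_derivative D2 x) (at x)"
    and cont: "\<And>v. continuous_on W (\<lambda>x. D1 x v)" "\<And>v. continuous_on W (\<lambda>x. D2 x v)"
    and ker: "{v. D1 p v = 0} \<noteq> {v. D2 p v = 0}" "{v. D1 p v = 0} \<noteq> UNIV" "{v. D2 p v = 0} \<noteq> UNIV"
  obtains \<Phi> \<Psi> :: "real^3 \<Rightarrow> real^3" and \<Psi>' Nb \<epsilon> where "open Nb" "p \<in> Nb" "0 < \<epsilon>"
    "\<And>x. x \<in> Nb \<Longrightarrow> \<Phi> x \<in> ball (\<Phi> p) \<epsilon> \<and> \<Psi> (\<Phi> x) = x"
    "\<And>y. y \<in> ball (\<Phi> p) \<epsilon> \<Longrightarrow> \<Psi> y \<in> W \<and> (\<Psi> has_derivative \<Psi>' y) (at y)"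
    "\<And>y d. y \<in> ball (\<Phi> p) \<epsilon> \<Longrightarrow> D1 (\<Psi> y) (\<Psi>' y d) = d $ 1 \<and> D2 (\<Psi> y) (\<Psi>' y d) = d $ 2"
proof -
  obtain N1 N2 where N: "\<And>v. D1 p v = N1 \<bullet> v" "\<And>v. D2 p v = N2 \<bullet> v" "cross3 N1 N2 \<noteq> 0"
    by (rule independent_functionals_cross3[OF has_derivative_linear[OF dg1[OF W(2)]]
          has_derivative_linear[OF dg2[OF W(2)]] ker]) (assumption | rule that)+
  define k where "k = cross3 N1 N2"
  define \<Phi> :: "real^3 \<Rightarrow> real^3"
    where "\<Phi> x = g1 x *\<^sub>R axis 1 1 + g2 x *\<^sub>R axis 2 1 + (k \<bullet> x) *\<^sub>R axis 3 1" for x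
  define D\<Phi> :: "real^3 \<Rightarrow> real^3 \<Rightarrow> real^3"
    where "D\<Phi> x h = D1 x h *\<^sub>R axis 1 1 + D2 x h *\<^sub>R axis 2 1 + (k \<bullet> h) *\<^sub>R axis 3 1" for x h
  have D\<Phi>_components: "D\<Phi> x h $ 1 = D1 x h" "D\<Phi> x h $ 2 = D2 x h" "D\<Phi> x h $ 3 = k \<bullet> h" for x h
    by (simp_all add: D\<Phi>_def axis_def)
  have d\<Phi>: "(\<Phi> has_derivative D\<Phi> x) (at x)" if "x \<in> W" for x
    unfolding \<Phi>_def D\<Phi>_def using dg1[OF that] dg2[OF that]
    by (intro has_derivative_add has_derivative_scaleR_left has_derivative_inner_right
        has_derivative_ident)
  have cont\<Phi>: "continuous_on W (\<lambda>x. D\<Phi> x v)" for v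
    unfolding D\<Phi>_def by (intro continuous_on_add continuous_on_scaleR continuous_on_const cont)
  have inj: "inj (D\<Phi> p)"
  proof -
    have "v = 0" if "D\<Phi> p v = 0" for v
      using orthogonal_to_cross3_frame_imp_zero[of N1 v N2] D\<Phi>_components[of p v] that N
      by (simp add: k_def)
    then show ?thesis
      using linear_injective_0[OF has_derivative_linear[OF d\<Phi>[OF W(2)]]] by blast
  qed
  obtain \<Psi> \<Psi>' Nb \<epsilon> where "open Nb" "p \<in> Nb" "0 < \<epsilon>"
    and \<Phi>\<Psi>: "\<And>x. x \<in> Nb \<Longrightarrow> \<Phi> x \<in> ball (\<Phi> p) \<epsilon> \<and> \<Psi> (\<Phi> x) = x"
    and \<Psi>: "\<And>y. y \<in> ball (\<Phi> p) \<epsilon> \<Longrightarrow>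
       \<Psi> y \<in> W \<and> (\<Psi> has_derivative \<Psi>' y) (at y) \<and> (\<forall>d. D\<Phi> (\<Psi> y) (\<Psi>' y d) = d)"
    by (rule inverse_function_chart[OF W d\<Phi> cont\<Phi> inj]) (assumption | rule that)+
  then show ?thesis
    using \<Phi>\<Psi> \<Psi> by (intro that[of Nb \<epsilon> \<Phi> \<Psi> \<Psi>']) (auto simp: D\<Phi>_components(1,2)[symmetric])
qed

lemma function_of_coordinate:
  fixes A :: "real^'n \<Rightarrow> real"
  assumes B: "convex B" and dA: "\<And>z. z \<in> B \<Longrightarrow> (A has_derivative DA z) (at z)"
    and DA: "\<And>z d. z \<in> B \<Longrightarrow> d $ j = 0 \<Longrightarrow> DA z d = 0"
    and y: "y \<in> B" "y' \<in> B" "y $ j = y' $ j"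
  shows "A y = A y'"
proof -
  have seg: "y + r *\<^sub>R (y' - y) \<in> B" if "0 \<le> r" "r \<le> 1" for r
    using convexD[OF B y(1,2), of "1 - r" r] that by (simp add: algebra_simps)
  have d: "(A has_derivative DA (y + r *\<^sub>R (y' - y))) (at (y + r *\<^sub>R (y' - y)))"
    if "0 \<le> r" "r \<le> 1" for r
    using dA seg that by blast
  obtain r where "0 < r" "r < 1" "A (y + 1 *\<^sub>R (y' - y)) - A y = 1 * DA (y + r *\<^sub>R (y' - y)) (y' - y)"
    by (rule mean_value_along_segment[OF zero_less_one d]) (assumption | rule that)+
  moreover have "DA (y + r *\<^sub>R (y' - y)) (y' - y) = 0"
    using DA seg calculation(1,2) y(3) by simp
  ultimately show ?thesis
    by simp
qed

lemma constant_on_leaves_in_chart: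
  fixes \<Psi> :: "real^'n \<Rightarrow> 'a::real_normed_vector" and a :: "'a \<Rightarrow> real"
  assumes B: "convex B"
    and \<Psi>: "\<And>y. y \<in> B \<Longrightarrow> (\<Psi> has_derivative \<Psi>' y) (at y)"
    and D: "\<And>y d. y \<in> B \<Longrightarrow> D (\<Psi> y) (\<Psi>' y d) = d $ j"
    and a: "\<And>y. y \<in> B \<Longrightarrow> \<exists>Da. (a has_derivative Da) (at (\<Psi> y)) \<and> (\<forall>w. D (\<Psi> y) w = 0 \<longrightarrow> Da w = 0)"
    and y: "y \<in> B" "y' \<in> B" "y $ j = y' $ j"
  shows "a (\<Psi> y) = a (\<Psi> y')"
proof -
  have "\<forall>y\<in>B. \<exists>Da. (a has_derivative Da) (at (\<Psi> y)) \<and> (\<forall>w. D (\<Psi> y) w = 0 \<longrightarrow> Da w = 0)"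
    using a by blast
  from bchoice[OF this] obtain Da where Da: "\<forall>y\<in>B.
      (a has_derivative Da y) (at (\<Psi> y)) \<and> (\<forall>w. D (\<Psi> y) w = 0 \<longrightarrow> Da y w = 0)"
    by blast
  have comp: "((\<lambda>y. a (\<Psi> y)) has_derivative (\<lambda>h. Da z (\<Psi>' z h))) (at z)" if "z \<in> B" for z
    by (rule has_derivative_compose[OF \<Psi>[OF that]]) (use Da that in blast)
  have comp_zero: "Da z (\<Psi>' z d) = 0" if "z \<in> B" "d $ j = 0" for z d
    using Da D[OF that(1), of d] that by auto
  show ?thesis
    by (rule function_of_coordinate[OF B comp comp_zero y])
qed

section \<open>Abelian relations\<close>

text \<open>This is all the rank bound uses about an abelian relation; unlike smoothness, it is
  evidently preserved by linear combinations.\<close>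
definition weak_abelian_relation :: "(real^3) set \<Rightarrow> (real^3 \<Rightarrow> (real^3) set) \<Rightarrow>
    (real^3 \<Rightarrow> (real^3) set) \<Rightarrow> (real^3 \<Rightarrow> (real^3) set) \<Rightarrow> form1 \<Rightarrow> form1 \<Rightarrow> form1 \<Rightarrow> bool" where
  "weak_abelian_relation U T1 T2 T3 \<sigma>1 \<sigma>2 \<sigma>3 \<longleftrightarrow>
     vanishes_on_leaves U T1 \<sigma>1 \<and> vanishes_on_leaves U T2 \<sigma>2 \<and> vanishes_on_leaves U T3 \<sigma>3 \<and>
     symmetric_derivative_on U \<sigma>1 \<and> symmetric_derivative_on U \<sigma>2 \<and>
     (\<forall>p\<in>U. \<sigma>1 p + \<sigma>2 p + \<sigma>3 p = 0)"

lemma closed_form_imp_symmetric_derivative_on: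
  assumes "open U" "closed_form U \<sigma>"
  shows "symmetric_derivative_on U \<sigma>"
  using assms smooth_on_has_derivative differentiableI
  unfolding closed_form_def symmetric_derivative_on_def by blast

lemma weak_abelian_relation_if_abelian_relation:
  assumes "open U" "abelian_relation U T1 T2 T3 (\<sigma>1, \<sigma>2, \<sigma>3)"
  shows "weak_abelian_relation U T1 T2 T3 \<sigma>1 \<sigma>2 \<sigma>3"
  using assms closed_form_imp_symmetric_derivative_on
  unfolding abelian_relation_def weak_abelian_relation_def by auto

lemma symmetric_derivative_on_lincomb:
  fixes \<sigma> \<tau> :: "'a::real_inner \<Rightarrow> 'a"
  assumes "symmetric_derivative_on U \<sigma>" "symmetric_derivative_on U \<tau>"
  shows "symmetric_derivative_on U (\<lambda>p. x *\<^sub>R \<sigma> p + y *\<^sub>R \<tau> p)"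
  unfolding symmetric_derivative_on_def
proof (intro ballI conjI allI)
  fix q assume q: "q \<in> U"
  let ?D\<sigma> = "frechet_derivative \<sigma> (at q)" and ?D\<tau> = "frechet_derivative \<tau> (at q)"
  have "(\<sigma> has_derivative ?D\<sigma>) (at q)" "(\<tau> has_derivative ?D\<tau>) (at q)"
    and sym: "\<And>u v. ?D\<sigma> u \<bullet> v = ?D\<sigma> v \<bullet> u" "\<And>u v. ?D\<tau> u \<bullet> v = ?D\<tau> v \<bullet> u"
    using assms q unfolding symmetric_derivative_on_def frechet_derivative_works by auto
  then have d: "((\<lambda>p. x *\<^sub>R \<sigma> p + y *\<^sub>R \<tau> p) has_derivative (\<lambda>h. x *\<^sub>R ?D\<sigma> h + y *\<^sub>R ?D\<tau> h)) (at q)"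
    by (intro has_derivative_add has_derivative_scaleR_right)
  then show "(\<lambda>p. x *\<^sub>R \<sigma> p + y *\<^sub>R \<tau> p) differentiable at q"
    by (rule differentiableI)
  fix u v
  show "frechet_derivative (\<lambda>p. x *\<^sub>R \<sigma> p + y *\<^sub>R \<tau> p) (at q) u \<bullet> v
      = frechet_derivative (\<lambda>p. x *\<^sub>R \<sigma> p + y *\<^sub>R \<tau> p) (at q) v \<bullet> u"
    using sym by (simp add: frechet_derivative_at[OF d, symmetric] inner_add_left)
qed

lemma weak_abelian_relation_lincomb:
  assumes "weak_abelian_relation U T1 T2 T3 a1 a2 a3" "weak_abelian_relation U T1 T2 T3 b1 b2 b3"
  shows "weak_abelian_relation U T1 T2 T3
    (\<lambda>p. x *\<^sub>R a1 p + y *\<^sub>R b1 p) (\<lambda>p. x *\<^sub>R a2 p + y *\<^sub>R b2 p) (\<lambda>p. x *\<^sub>R a3 p + y *\<^sub>R b3 p)"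
proof -
  have "vanishes_on_leaves U T (\<lambda>p. x *\<^sub>R a p + y *\<^sub>R b p)"
    if "vanishes_on_leaves U T a" "vanishes_on_leaves U T b" for T and a b :: form1
    using that by (simp add: vanishes_on_leaves_def inner_add_left)
  moreover have "x *\<^sub>R a1 p + y *\<^sub>R b1 p + (x *\<^sub>R a2 p + y *\<^sub>R b2 p) + (x *\<^sub>R a3 p + y *\<^sub>R b3 p)
      = x *\<^sub>R (a1 p + a2 p + a3 p) + y *\<^sub>R (b1 p + b2 p + b3 p)" for p
    by (simp add: algebra_simps)
  ultimately show ?thesis
    using assms symmetric_derivative_on_lincomb[of U a1 b1] symmetric_derivative_on_lincomb[of U a2 b2]
    unfolding weak_abelian_relation_def by simp
qed

lemma weak_abelian_relation_pointwise:
  assumes F1: "surface_foliation U T1" and F2: "surface_foliation U T2"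
    and nd: "nondegenerate_web U T1 T2 T3" and R: "weak_abelian_relation U T1 T2 T3 \<sigma>1 \<sigma>2 \<sigma>3"
    and q: "q \<in> U"
  shows "\<sigma>1 q = 0 \<longleftrightarrow> \<sigma>2 q = 0"
proof -
  have van: "\<forall>v\<in>T1 q. \<sigma>1 q \<bullet> v = 0" "\<forall>v\<in>T2 q. \<sigma>2 q \<bullet> v = 0" "\<forall>v\<in>T3 q. \<sigma>3 q \<bullet> v = 0"
    and "\<sigma>1 q + \<sigma>2 q + \<sigma>3 q = 0"
    using R q unfolding weak_abelian_relation_def vanishes_on_leaves_def by auto
  then have sum: "\<sigma>3 q = - (\<sigma>1 q + \<sigma>2 q)"
    by (metis add.commute eq_neg_iff_add_eq_0)
  have "\<not> T3 q \<subseteq> T1 q" "\<not> T3 q \<subseteq> T2 q"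
    using nd q unfolding nondegenerate_web_def by auto
  note zero1 = vanishes_on_transversal_leaves_imp_zero[where T'=T3, OF F1 q \<open>\<not> T3 q \<subseteq> T1 q\<close> van(1)]
    and zero2 = vanishes_on_transversal_leaves_imp_zero[where T'=T3, OF F2 q \<open>\<not> T3 q \<subseteq> T2 q\<close> van(2)]
  show ?thesis
  proof
    assume "\<sigma>1 q = 0"
    then show "\<sigma>2 q = 0"
      using van(3) sum by (intro zero2) (simp add: inner_minus_left)
  next
    assume "\<sigma>2 q = 0"
    then show "\<sigma>1 q = 0"
      using van(3) sum by (intro zero1) (simp add: inner_minus_left)
  qed
qed

lemma weak_abelian_relation_zero_sets_in_chart:
  assumes F1: "surface_foliation U T1" and F2: "surface_foliation U T2"
    and nd: "nondegenerate_web U T1 T2 T3" and R: "weak_abelian_relation U T1 T2 T3 \<sigma>1 \<sigma>2 \<sigma>3"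
    and p: "p \<in> U"
  obtains \<Phi> \<Psi> :: "real^3 \<Rightarrow> real^3" and Nb \<epsilon> where "open Nb" "p \<in> Nb" "0 < \<epsilon>"
    "\<And>x. x \<in> Nb \<Longrightarrow> \<Phi> x \<in> ball (\<Phi> p) \<epsilon> \<and> \<Psi> (\<Phi> x) = x"
    "\<And>y. y \<in> ball (\<Phi> p) \<epsilon> \<Longrightarrow> \<Psi> y \<in> U"
    "\<And>y y'. y \<in> ball (\<Phi> p) \<epsilon> \<Longrightarrow> y' \<in> ball (\<Phi> p) \<epsilon> \<Longrightarrow> y $ 1 = y' $ 1 \<Longrightarrow>
       \<sigma>1 (\<Psi> y) = 0 \<longleftrightarrow> \<sigma>1 (\<Psi> y') = 0"
    "\<And>y y'. y \<in> ball (\<Phi> p) \<epsilon> \<Longrightarrow> y' \<in> ball (\<Phi> p) \<epsilon> \<Longrightarrow> y $ 2 = y' $ 2 \<Longrightarrow>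
       \<sigma>2 (\<Psi> y) = 0 \<longleftrightarrow> \<sigma>2 (\<Psi> y') = 0"
proof -
  have van: "vanishes_on_leaves U T1 \<sigma>1" "vanishes_on_leaves U T2 \<sigma>2"
    and sym: "symmetric_derivative_on U \<sigma>1" "symmetric_derivative_on U \<sigma>2"
    using R by (simp_all add: weak_abelian_relation_def)
  obtain W1 and g1 a1 :: "real^3 \<Rightarrow> real" where W1: "open W1" "p \<in> W1" "W1 \<subseteq> U" "smooth_on W1 g1"
    and T1: "\<And>q. q \<in> W1 \<Longrightarrow> T1 q = {v. frechet_derivative g1 (at q) v = 0}"
    and a1: "\<And>q. q \<in> W1 \<Longrightarrow> \<exists>Da. (a1 has_derivative Da) (at q) \<and>
      (\<forall>w. frechet_derivative g1 (at q) w = 0 \<longrightarrow> Da w = 0)"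
    and a1_zero: "\<And>q. q \<in> W1 \<Longrightarrow> a1 q = 0 \<longleftrightarrow> \<sigma>1 q = 0"
    by (rule surface_foliation_leaf_coefficient[OF F1 p van(1) sym(1)]) (assumption | rule that)+
  obtain W2 and g2 a2 :: "real^3 \<Rightarrow> real" where W2: "open W2" "p \<in> W2" "W2 \<subseteq> U" "smooth_on W2 g2"
    and T2: "\<And>q. q \<in> W2 \<Longrightarrow> T2 q = {v. frechet_derivative g2 (at q) v = 0}"
    and a2: "\<And>q. q \<in> W2 \<Longrightarrow> \<exists>Da. (a2 has_derivative Da) (at q) \<and>
      (\<forall>w. frechet_derivative g2 (at q) w = 0 \<longrightarrow> Da w = 0)"
    and a2_zero: "\<And>q. q \<in> W2 \<Longrightarrow> a2 q = 0 \<longleftrightarrow> \<sigma>2 q = 0"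
    by (rule surface_foliation_leaf_coefficient[OF F2 p van(2) sym(2)]) (assumption | rule that)+
  let ?W = "W1 \<inter> W2"
  have W: "open ?W" "p \<in> ?W" and smooth: "smooth_on ?W g1" "smooth_on ?W g2"
    using W1 W2 smooth_on_subset[OF W1(4)] smooth_on_subset[OF W2(4)] by auto
  have ker: "{v. frechet_derivative g1 (at p) v = 0} \<noteq> {v. frechet_derivative g2 (at p) v = 0}"
    "{v. frechet_derivative g1 (at p) v = 0} \<noteq> UNIV" "{v. frechet_derivative g2 (at p) v = 0} \<noteq> UNIV"
    using nd p T1[OF W1(2)] T2[OF W2(2)] unfolding nondegenerate_web_def by auto
  obtain \<Phi> \<Psi> :: "real^3 \<Rightarrow> real^3" and \<Psi>' Nb \<epsilon> where "open Nb" "p \<in> Nb" "0 < \<epsilon>"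
    and \<Phi>: "\<And>x. x \<in> Nb \<Longrightarrow> \<Phi> x \<in> ball (\<Phi> p) \<epsilon> \<and> \<Psi> (\<Phi> x) = x"
    and \<Psi>: "\<And>y. y \<in> ball (\<Phi> p) \<epsilon> \<Longrightarrow> \<Psi> y \<in> ?W \<and> (\<Psi> has_derivative \<Psi>' y) (at y)"
    and coord: "\<And>y d. y \<in> ball (\<Phi> p) \<epsilon> \<Longrightarrow> frechet_derivative g1 (at (\<Psi> y)) (\<Psi>' y d) = d $ 1
      \<and> frechet_derivative g2 (at (\<Psi> y)) (\<Psi>' y d) = d $ 2"
    by (rule rectifying_chart[OF W smooth_on_has_derivative[OF W(1) smooth(1)]
          smooth_on_has_derivative[OF W(1) smooth(2)]
          smooth_on_continuous_on[OF smooth_on_frechet_derivative[OF smooth(1)]]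
          smooth_on_continuous_on[OF smooth_on_frechet_derivative[OF smooth(2)]] ker])
      (assumption | rule that)+
  have d\<Psi>: "\<And>y. y \<in> ball (\<Phi> p) \<epsilon> \<Longrightarrow> (\<Psi> has_derivative \<Psi>' y) (at y)"
    and coord1: "\<And>y d. y \<in> ball (\<Phi> p) \<epsilon> \<Longrightarrow> frechet_derivative g1 (at (\<Psi> y)) (\<Psi>' y d) = d $ 1"
    and coord2: "\<And>y d. y \<in> ball (\<Phi> p) \<epsilon> \<Longrightarrow> frechet_derivative g2 (at (\<Psi> y)) (\<Psi>' y d) = d $ 2"
    and a1': "\<And>y. y \<in> ball (\<Phi> p) \<epsilon> \<Longrightarrow> \<exists>Da. (a1 has_derivative Da) (at (\<Psi> y)) \<and>
      (\<forall>w. frechet_derivative g1 (at (\<Psi> y)) w = 0 \<longrightarrow> Da w = 0)"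
    and a2': "\<And>y. y \<in> ball (\<Phi> p) \<epsilon> \<Longrightarrow> \<exists>Da. (a2 has_derivative Da) (at (\<Psi> y)) \<and>
      (\<forall>w. frechet_derivative g2 (at (\<Psi> y)) w = 0 \<longrightarrow> Da w = 0)"
    using \<Psi> coord a1 a2 by blast+
  show ?thesis
  proof (rule that[OF \<open>open Nb\<close> \<open>p \<in> Nb\<close> \<open>0 < \<epsilon>\<close> \<Phi>])
    show "\<Psi> y \<in> U" if "y \<in> ball (\<Phi> p) \<epsilon>" for y
      using \<Psi>[OF that] W1(3) by auto
    show "\<sigma>1 (\<Psi> y) = 0 \<longleftrightarrow> \<sigma>1 (\<Psi> y') = 0"
      if "y \<in> ball (\<Phi> p) \<epsilon>" "y' \<in> ball (\<Phi> p) \<epsilon>" "y $ 1 = y' $ 1" for y y'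
      using constant_on_leaves_in_chart[OF convex_ball d\<Psi> coord1 a1' that]
        a1_zero[of "\<Psi> y"] a1_zero[of "\<Psi> y'"] \<Psi>[OF that(1)] \<Psi>[OF that(2)] by auto
    show "\<sigma>2 (\<Psi> y) = 0 \<longleftrightarrow> \<sigma>2 (\<Psi> y') = 0"
      if "y \<in> ball (\<Phi> p) \<epsilon>" "y' \<in> ball (\<Phi> p) \<epsilon>" "y $ 2 = y' $ 2" for y y'
      using constant_on_leaves_in_chart[OF convex_ball d\<Psi> coord2 a2' that]
        a2_zero[of "\<Psi> y"] a2_zero[of "\<Psi> y'"] \<Psi>[OF that(1)] \<Psi>[OF that(2)] by auto
  qed
qed

lemma weak_abelian_relation_zero_nearby:
  assumes F1: "surface_foliation U T1" and F2: "surface_foliation U T2"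
    and nd: "nondegenerate_web U T1 T2 T3" and R: "weak_abelian_relation U T1 T2 T3 \<sigma>1 \<sigma>2 \<sigma>3"
    and p: "p \<in> U" "\<sigma>1 p = 0"
  obtains Nb where "open Nb" "p \<in> Nb" "\<And>x. x \<in> Nb \<Longrightarrow> \<sigma>1 x = 0"
proof -
  obtain \<Phi> \<Psi> :: "real^3 \<Rightarrow> real^3" and Nb \<epsilon> where nb: "open Nb" "p \<in> Nb" "0 < \<epsilon>"
    and \<Phi>: "\<And>x. x \<in> Nb \<Longrightarrow> \<Phi> x \<in> ball (\<Phi> p) \<epsilon> \<and> \<Psi> (\<Phi> x) = x"
    and \<Psi>: "\<And>y. y \<in> ball (\<Phi> p) \<epsilon> \<Longrightarrow> \<Psi> y \<in> U"
    and leaf1: "\<And>y y'. y \<in> ball (\<Phi> p) \<epsilon> \<Longrightarrow> y' \<in> ball (\<Phi> p) \<epsilon> \<Longrightarrow> y $ 1 = y' $ 1 \<Longrightarrow>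
      \<sigma>1 (\<Psi> y) = 0 \<longleftrightarrow> \<sigma>1 (\<Psi> y') = 0"
    and leaf2: "\<And>y y'. y \<in> ball (\<Phi> p) \<epsilon> \<Longrightarrow> y' \<in> ball (\<Phi> p) \<epsilon> \<Longrightarrow> y $ 2 = y' $ 2 \<Longrightarrow>
      \<sigma>2 (\<Psi> y) = 0 \<longleftrightarrow> \<sigma>2 (\<Psi> y') = 0"
    by (rule weak_abelian_relation_zero_sets_in_chart[OF F1 F2 nd R p(1)]) (assumption | rule that)+
  note pointwise = weak_abelian_relation_pointwise[OF F1 F2 nd R]
  show ?thesis
  proof (rule that[OF nb(1,2)])
    fix x assume x: "x \<in> Nb"
    define y where "y = \<Phi> x"
    \<comment> \<open>\<open>z\<close> lies on the leaf of \<open>T1\<close> through \<open>p\<close> and on the leaf of \<open>T2\<close> through \<open>x\<close>\<close>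
    define z where "z = \<Phi> p + ((y - \<Phi> p) $ 2) *\<^sub>R axis 2 1"
    have y: "y \<in> ball (\<Phi> p) \<epsilon>" "\<Psi> y = x" and p': "\<Phi> p \<in> ball (\<Phi> p) \<epsilon>" "\<Psi> (\<Phi> p) = p"
      using \<Phi>[OF x] \<Phi>[OF nb(2)] nb(3) by (simp_all add: y_def)
    have "dist (\<Phi> p) z \<le> norm (y - \<Phi> p)"
      using component_le_norm_cart[of "y - \<Phi> p" 2] by (simp add: z_def dist_norm)
    then have z: "z \<in> ball (\<Phi> p) \<epsilon>"
      using y(1) by (simp add: dist_norm norm_minus_commute)
    have "\<sigma>1 (\<Psi> z) = 0"
      using leaf1[OF z p'(1)] p'(2) p(2) by (simp add: z_def axis_def)
    then have "\<sigma>2 (\<Psi> z) = 0"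
      using pointwise \<Psi>[OF z] by blast
    then have "\<sigma>2 x = 0"
      using leaf2[OF z y(1)] y(2) by (simp add: z_def axis_def)
    then show "\<sigma>1 x = 0"
      using pointwise \<Psi>[OF y(1)] y(2) by simp
  qed
qed

lemma weak_abelian_relation_zero_if_zero_at:
  assumes U: "open U" "connected U" and F1: "surface_foliation U T1"
    and F2: "surface_foliation U T2" and nd: "nondegenerate_web U T1 T2 T3"
    and R: "weak_abelian_relation U T1 T2 T3 \<sigma>1 \<sigma>2 \<sigma>3"
    and p0: "p0 \<in> U" "\<sigma>1 p0 = 0" and p: "p \<in> U"
  shows "\<sigma>1 p = 0 \<and> \<sigma>2 p = 0 \<and> \<sigma>3 p = 0"
proof -
  let ?Z = "{x \<in> U. \<sigma>1 x = 0}"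
  have "open ?Z"
    unfolding open_subopen[of ?Z]
  proof
    fix x assume x: "x \<in> ?Z"
    then have "x \<in> U" "\<sigma>1 x = 0"
      by auto
    then obtain Nb where "open Nb" "x \<in> Nb" "\<And>y. y \<in> Nb \<Longrightarrow> \<sigma>1 y = 0"
      by (rule weak_abelian_relation_zero_nearby[OF F1 F2 nd R]) (assumption | rule that)+
    then show "\<exists>T. open T \<and> x \<in> T \<and> T \<subseteq> ?Z"
      using x U(1) by (intro exI[of _ "Nb \<inter> U"]) auto
  qed
  then have "openin (top_of_set U) ?Z"
    by (rule open_subset[rotated]) auto
  moreover have "continuous_on U \<sigma>1"
    using R differentiable_imp_continuous_within
    unfolding weak_abelian_relation_def symmetric_derivative_on_def
    by (blast intro: continuous_at_imp_continuous_on)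
  then have "closedin (top_of_set U) ?Z"
    by (rule continuous_closedin_preimage_constant)
  ultimately have "?Z = {} \<or> ?Z = U"
    using U(2) unfolding connected_clopen by blast
  then have "?Z = U"
    using p0 by blast
  then have "\<sigma>1 p = 0" "\<sigma>2 p = 0"
    using p weak_abelian_relation_pointwise[OF F1 F2 nd R p] by auto
  moreover have "\<sigma>1 p + \<sigma>2 p + \<sigma>3 p = 0"
    using R p unfolding weak_abelian_relation_def by blast
  ultimately show ?thesis
    by simp
qed

lemma weak_abelian_relations_dependent:
  assumes U: "open U" "connected U" and F1: "surface_foliation U T1"
    and F2: "surface_foliation U T2" and nd: "nondegenerate_web U T1 T2 T3"
    and A: "weak_abelian_relation U T1 T2 T3 a1 a2 a3"
    and B: "weak_abelian_relation U T1 T2 T3 b1 b2 b3"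
  obtains x y :: real where "x \<noteq> 0 \<or> y \<noteq> 0"
    "\<And>p. p \<in> U \<Longrightarrow> x *\<^sub>R a1 p + y *\<^sub>R b1 p = 0 \<and> x *\<^sub>R a2 p + y *\<^sub>R b2 p = 0 \<and>
       x *\<^sub>R a3 p + y *\<^sub>R b3 p = 0"
proof (cases "\<exists>p0\<in>U. b1 p0 \<noteq> 0")
  case True
  then obtain p0 where p0: "p0 \<in> U" "b1 p0 \<noteq> 0"
    by blast
  moreover have "\<forall>v\<in>T1 p0. a1 p0 \<bullet> v = 0" "\<forall>v\<in>T1 p0. b1 p0 \<bullet> v = 0"
    using A B p0(1) unfolding weak_abelian_relation_def vanishes_on_leaves_def by auto
  ultimately obtain c where c: "a1 p0 = c *\<^sub>R b1 p0"
    using vanishes_on_leaf_imp_parallel[OF F1 p0(1)] by metis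
  show ?thesis
  proof (rule that[of 1 "- c"])
    show "1 *\<^sub>R a1 p + (- c) *\<^sub>R b1 p = 0 \<and> 1 *\<^sub>R a2 p + (- c) *\<^sub>R b2 p = 0 \<and>
        1 *\<^sub>R a3 p + (- c) *\<^sub>R b3 p = 0" if "p \<in> U" for p
      using weak_abelian_relation_zero_if_zero_at[OF U F1 F2 nd
          weak_abelian_relation_lincomb[OF A B, of 1 "- c"] p0(1) _ that] c
      by simp
  qed simp
next
  case False
  show ?thesis
  proof (rule that[of 0 1])
    show "0 *\<^sub>R a1 p + 1 *\<^sub>R b1 p = 0 \<and> 0 *\<^sub>R a2 p + 1 *\<^sub>R b2 p = 0 \<and> 0 *\<^sub>R a3 p + 1 *\<^sub>R b3 p = 0"
      if "p \<in> U" for p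
      using weak_abelian_relation_zero_if_zero_at[OF U F1 F2 nd B that _ that] False that by auto
  qed simp
qed

lemma independent_abelian_relations_le_1:
  assumes U: "open U" "connected U" and F1: "surface_foliation U T1"
    and F2: "surface_foliation U T2" and nd: "nondegenerate_web U T1 T2 T3"
    and R: "\<forall>k<n. abelian_relation U T1 T2 T3 (R k)" and indep: "independent_on U n R"
  shows "n \<le> 1"
proof (rule ccontr)
  assume "\<not> n \<le> 1"
  then have n: "0 < n" "1 < n"
    by simp_all
  have weak: "weak_abelian_relation U T1 T2 T3 (fst (R k)) (fst (snd (R k))) (snd (snd (R k)))"
    if "k < n" for k
    using weak_abelian_relation_if_abelian_relation[OF U(1)] R that by simp
  obtain x y where xy: "x \<noteq> 0 \<or> y \<noteq> 0"
    and dep: "\<And>p. p \<in> U \<Longrightarrow> x *\<^sub>R fst (R 0) p + y *\<^sub>R fst (R 1) p = 0 \<and>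
      x *\<^sub>R fst (snd (R 0)) p + y *\<^sub>R fst (snd (R 1)) p = 0 \<and>
      x *\<^sub>R snd (snd (R 0)) p + y *\<^sub>R snd (snd (R 1)) p = 0"
    by (rule weak_abelian_relations_dependent[OF U F1 F2 nd weak[OF n(1)] weak[OF n(2)]]) (assumption | rule that)+
  define c where "c k = (if k = 0 then x else if k = 1 then y else 0)" for k :: nat
  have sum: "(\<Sum>k<n. c k *\<^sub>R f k) = x *\<^sub>R f 0 + y *\<^sub>R f 1" for f :: "nat \<Rightarrow> real^3"
  proof -
    have "(\<Sum>k<n. c k *\<^sub>R f k) = (\<Sum>k\<in>{0, 1}. c k *\<^sub>R f k)"
      using n by (intro sum.mono_neutral_right) (auto simp: c_def)
    then show ?thesis
      by (simp add: c_def)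
  qed
  have "\<forall>p\<in>U. (\<Sum>k<n. c k *\<^sub>R fst (R k) p) = 0 \<and> (\<Sum>k<n. c k *\<^sub>R fst (snd (R k)) p) = 0 \<and>
      (\<Sum>k<n. c k *\<^sub>R snd (snd (R k)) p) = 0"
    using dep by (simp add: sum)
  then have "\<forall>k<n. c k = 0"
    using indep[unfolded independent_on_def, rule_format, of c] by blast
  then show False
    using xy n by (auto simp: c_def)
qed

theorem lemma1:
  fixes U :: "(real^3) set" and T1 T2 T3 :: "real^3 \<Rightarrow> (real^3) set"
  assumes "open U" and "connected U"
    and "surface_foliation U T1" and "surface_foliation U T2" and "curve_foliation U T3"
    and "nondegenerate_web U T1 T2 T3"
  shows "web_rank U T1 T2 T3 \<le> 1"
  unfolding web_rank_def
  using independent_abelian_relations_le_1[OF assms(1-4,6)]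
  by (auto intro!: Sup_least simp: one_enat_def)

end
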